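(* Fix a finite alphabet $\Sigma$. For every $C_7\in\mathbb{N}$ there exists $C_9$, bounded by a polynomial in $C_7$ (the polynomial depending only on $|\Sigma|$), such that the following holds. Let $P,Q\subseteq[0..C_7]^\Sigma$ with $0\notin P$, $0\notin Q$, and $\bigoplus_{\mathbb{P}}P\cap\bigoplus_{\mathbb{P}}Q=\{0\}$. Then there is a linear function $\Phi:\mathbb{Q}^\Sigma\to\mathbb{Q}$ with integer coefficients, $\Phi(x)=\sum_{\sigma\in\Sigma}\phi_\sigma x_\sigma$ with $\phi\in\mathbb{Z}^\Sigma$, such that $\Phi(p)>0$ for all $p\in P$, $\Phi(q)<0$ for all $q\in Q$, and $\sum_\sigma|\phi_\sigma|\le C_9$.
   Context: $[0..C]=\{0,1,\ldots,C\}$; $\mathbb{P}$ is the set of non-negative rationals; for a set $B$ of vectors, $\bigoplus_{\mathbb{P}}B=\{\sum_{b\in B}\alpha_b b:\alpha_b\in\mathbb{P}\text{ for all } b\in B\}$. *)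

theory Defs
  imports Main "HOL-Computational_Algebra.Polynomial"
begin

definition box :: "nat \<Rightarrow> ('a \<Rightarrow> rat) set" where
  "box C = {v. \<forall>\<sigma>. \<exists>k::nat. k \<le> C \<and> v \<sigma> = of_nat k}"

definition pcone :: "('a \<Rightarrow> rat) set \<Rightarrow> ('a \<Rightarrow> rat) set" where
  "pcone B = {x. \<exists>\<alpha>::('a \<Rightarrow> rat) \<Rightarrow> rat. (\<forall>b\<in>B. \<alpha> b \<ge> 0) \<and>
                   x = (\<lambda>\<sigma>. \<Sum>b\<in>B. \<alpha> b * b \<sigma>)}"

end

theory Submission
  imports Defs "HOL-Analysis.Analysis"
begin

text \<open>Put \<open>R = P \<union> -Q\<close>. The cone condition says that no nontrivial non-negative combination of \<open>R\<close>
  vanishes, so by Gordan's theorem some \<open>\<phi>\<close> has \<open>\<phi> \<bullet> r > 0\<close> on all of \<open>R\<close>. Among the separators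
  normalised by \<open>\<phi> \<bullet> r \<ge> 1\<close> pick a vertex, i.e. one at which the tight constraints span the whole
  space. It solves a nonsingular system \<open>M \<phi> = b\<close> whose entries are integers of size at most \<open>C + 1\<close>,
  so by Cramer's rule \<open>\<bar>det M\<bar> \<phi>\<close> is an integral separator with entries of size at most
  \<open>n! (C + 1)^n\<close>, \<open>n = |\<Sigma>|\<close>.\<close>

section \<open>Gordan's theorem\<close>

definition dot :: "('a::finite \<Rightarrow> 'f::comm_semiring_0) \<Rightarrow> ('a \<Rightarrow> 'f) \<Rightarrow> 'f" where
  "dot u w = (\<Sum>\<sigma>\<in>UNIV. u \<sigma> * w \<sigma>)"

lemma dot_lincomb_left:
  "dot (\<lambda>\<sigma>. a * u \<sigma> + b * z \<sigma>) w = a * dot u w + b * dot z (w :: _ \<Rightarrow> 'f::comm_semiring_1)"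
  by (simp add: dot_def sum.distrib sum_distrib_left algebra_simps)

lemma dot_lincomb_right:
  "dot u (\<lambda>\<sigma>. a * w \<sigma> + b * z \<sigma>) = a * dot u w + b * dot u (z :: _ \<Rightarrow> 'f::comm_semiring_1)"
  by (simp add: dot_def sum.distrib sum_distrib_left algebra_simps)

lemma dot_self_pos:
  fixes u :: "'a::finite \<Rightarrow> 'f::linordered_idom"
  assumes "u \<noteq> (\<lambda>_. 0)"
  shows "dot u u > 0"
proof -
  obtain s where "u s \<noteq> 0" using assms by auto
  then have "0 < u s * u s" by (auto simp: zero_less_mult_iff linorder_neq_iff)
  also have "\<dots> \<le> dot u u"
    unfolding dot_def by (rule member_le_sum) auto
  finally show ?thesis .
qed

definition positively_independent :: "'i set \<Rightarrow> ('i \<Rightarrow> 'a \<Rightarrow> 'f::linordered_field) \<Rightarrow> bool" where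
  "positively_independent I v \<longleftrightarrow>
     (\<forall>c. (\<forall>i\<in>I. c i \<ge> 0) \<longrightarrow> (\<forall>\<sigma>. (\<Sum>i\<in>I. c i * v i \<sigma>) = 0) \<longrightarrow> (\<forall>i\<in>I. c i = 0))"

lemma positively_independentD:
  "positively_independent I v \<Longrightarrow> \<forall>i\<in>I. c i \<ge> 0 \<Longrightarrow> (\<And>\<sigma>. (\<Sum>i\<in>I. c i * v i \<sigma>) = 0)
    \<Longrightarrow> i \<in> I \<Longrightarrow> c i = 0"
  unfolding positively_independent_def by blast

lemma positively_independent_subset:
  assumes "positively_independent I v" "J \<subseteq> I" "finite I"
  shows "positively_independent J v"
  unfolding positively_independent_def
proof (intro allI impI ballI)
  fix c i assume c: "\<forall>j\<in>J. c j \<ge> 0" "\<forall>\<sigma>. (\<Sum>j\<in>J. c j * v j \<sigma>) = 0" and i: "i \<in> J"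
  define c' where "c' j = (if j \<in> J then c j else 0)" for j
  have "c' i = 0"
  proof (rule positively_independentD[OF assms(1)])
    show "\<forall>j\<in>I. c' j \<ge> 0" using c(1) by (simp add: c'_def)
    show "(\<Sum>j\<in>I. c' j * v j \<sigma>) = 0" for \<sigma>
    proof -
      have "(\<Sum>j\<in>I. c' j * v j \<sigma>) = (\<Sum>j\<in>J. c j * v j \<sigma>)"
        using assms(2,3) by (intro sum.mono_neutral_cong_right) (auto simp: c'_def)
      then show ?thesis using c(2) by simp
    qed
    show "i \<in> I" using i assms(2) by blast
  qed
  then show "c i = 0" using i by (simp add: c'_def)
qed

lemma positively_independent_nonzero:
  fixes v :: "'i \<Rightarrow> 'a \<Rightarrow> 'f::linordered_field"
  assumes "positively_independent I v" "i \<in> I"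
  shows "v i \<noteq> (\<lambda>_. 0)"
proof
  assume vi: "v i = (\<lambda>_. 0)"
  define c where "c j = (if j = i then 1 else 0 :: 'f)" for j
  have sum0: "(\<Sum>j\<in>I. c j * v j \<sigma>) = 0" for \<sigma>
    using vi by (intro sum.neutral) (auto simp: c_def)
  have "c i = 0"
    by (rule positively_independentD[OF assms(1) _ sum0 assms(2)]) (simp add: c_def)
  then show False by (simp add: c_def)
qed

lemma exists_scale_dot_pos:
  fixes v :: "'i \<Rightarrow> 'a::finite \<Rightarrow> 'f::linordered_field"
  assumes "finite I" "\<forall>i\<in>I. dot (v i) \<phi> > 0"
  shows "\<exists>N. \<forall>i\<in>I. dot (v i) (\<lambda>\<sigma>. N * \<phi> \<sigma> + \<psi> \<sigma>) > 0"
proof (intro exI ballI)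
  define N where "N = 1 + (\<Sum>i\<in>I. \<bar>dot (v i) \<psi>\<bar> / dot (v i) \<phi>)"
  fix i assume i: "i \<in> I"
  have pos: "dot (v i) \<phi> > 0" using assms(2) i by blast
  have "\<bar>dot (v i) \<psi>\<bar> / dot (v i) \<phi> \<le> (\<Sum>j\<in>I. \<bar>dot (v j) \<psi>\<bar> / dot (v j) \<phi>)"
    by (rule member_le_sum[OF i]) (use assms in auto)
  then have "(1 + \<bar>dot (v i) \<psi>\<bar> / dot (v i) \<phi>) * dot (v i) \<phi> \<le> N * dot (v i) \<phi>"
    unfolding N_def using pos by (intro mult_right_mono) auto
  then have "dot (v i) \<phi> + \<bar>dot (v i) \<psi>\<bar> \<le> N * dot (v i) \<phi>"
    using pos by (simp add: algebra_simps)
  then show "dot (v i) (\<lambda>\<sigma>. N * \<phi> \<sigma> + \<psi> \<sigma>) > 0"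
    using pos dot_lincomb_right[of "v i" N \<phi> 1 \<psi>] by simp
qed

lemma dot_pos_insert:
  fixes v :: "'i \<Rightarrow> 'a::finite \<Rightarrow> 'f::linordered_field"
  assumes "finite I" "\<forall>i\<in>I. dot (v i) \<phi> > 0" "dot u \<phi> = 0" "dot u \<psi> > 0"
  shows "\<exists>\<phi>'. dot u \<phi>' > 0 \<and> (\<forall>i\<in>I. dot (v i) \<phi>' > 0)"
proof -
  obtain N where "\<forall>i\<in>I. dot (v i) (\<lambda>\<sigma>. N * \<phi> \<sigma> + \<psi> \<sigma>) > 0"
    using exists_scale_dot_pos[OF assms(1,2)] by blast
  moreover have "dot u (\<lambda>\<sigma>. N * \<phi> \<sigma> + \<psi> \<sigma>) > 0"
    using assms(3,4) dot_lincomb_right[of u N \<phi> 1 \<psi>] by simp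
  ultimately show ?thesis by blast
qed

lemma positively_independent_project:
  fixes v :: "'i \<Rightarrow> 'a::finite \<Rightarrow> 'f::linordered_field"
  assumes "positively_independent (insert a I) v" "finite I" "a \<notin> I"
    and "\<forall>i\<in>I. dot (v i) \<phi> \<ge> 0" "dot (v a) \<phi> < 0"
  shows "positively_independent I (\<lambda>i \<sigma>. dot (v i) \<phi> * v a \<sigma> + (- dot (v a) \<phi>) * v i \<sigma>)"
    (is "positively_independent I ?w")
  unfolding positively_independent_def
proof (intro allI impI ballI)
  fix l i assume l: "\<forall>j\<in>I. l j \<ge> 0" "\<forall>\<sigma>. (\<Sum>j\<in>I. l j * ?w j \<sigma>) = 0" and i: "i \<in> I"
  define \<alpha> where "\<alpha> = - dot (v a) \<phi>"
  define \<mu> where "\<mu> = (\<lambda>j. \<alpha> * l j)(a := (\<Sum>j\<in>I. l j * dot (v j) \<phi>))"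
  have \<mu>_I: "\<mu> j = \<alpha> * l j" if "j \<in> I" for j
    using that assms(3) by (auto simp: \<mu>_def)
  have "(\<Sum>j\<in>insert a I. \<mu> j * v j \<sigma>) = 0" for \<sigma>
  proof -
    have "(\<Sum>j\<in>insert a I. \<mu> j * v j \<sigma>) = \<mu> a * v a \<sigma> + (\<Sum>j\<in>I. \<alpha> * l j * v j \<sigma>)"
      using assms(2,3) \<mu>_I by simp
    also have "\<dots> = (\<Sum>j\<in>I. l j * ?w j \<sigma>)"
      by (simp add: \<mu>_def \<alpha>_def sum_distrib_left sum_subtractf sum_negf algebra_simps)
    finally show ?thesis using l(2) by simp
  qed
  moreover have "\<forall>j\<in>insert a I. \<mu> j \<ge> 0"
  proof
    fix j assume j: "j \<in> insert a I"
    show "\<mu> j \<ge> 0"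
    proof (cases "j = a")
      case True
      then show ?thesis using l(1) assms(4) by (simp add: \<mu>_def sum_nonneg)
    next
      case False
      then have "j \<in> I" "l j \<ge> 0" using j l(1) by auto
      then show ?thesis using \<mu>_I assms(5) by (simp add: \<alpha>_def mult_nonpos_nonneg)
    qed
  qed
  ultimately have "\<mu> i = 0"
    using i by (intro positively_independentD[OF assms(1), of \<mu> i]) auto
  then show "l i = 0" using \<mu>_I[OF i] assms(5) by (simp add: \<alpha>_def)
qed

theorem gordan:
  fixes v :: "'i \<Rightarrow> 'a::finite \<Rightarrow> 'f::linordered_field"
  assumes "finite I" "positively_independent I v"
  shows "\<exists>\<phi>. \<forall>i\<in>I. dot (v i) \<phi> > 0"
  using assms
proof (induction I arbitrary: v rule: finite_induct)
  case empty
  then show ?case by simp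
next
  case (insert a I)
  obtain \<phi> where \<phi>: "\<forall>i\<in>I. dot (v i) \<phi> > 0"
    using insert.IH[OF positively_independent_subset[OF insert.prems]] insert.hyps(1) by blast
  consider "dot (v a) \<phi> > 0" | "dot (v a) \<phi> = 0" | "dot (v a) \<phi> < 0"
    using less_linear by blast
  then show ?case
  proof cases
    case 1
    then show ?thesis using \<phi> by blast
  next
    case 2
    have "dot (v a) (v a) > 0"
      using positively_independent_nonzero[OF insert.prems] by (intro dot_self_pos) simp
    then show ?thesis using dot_pos_insert[OF insert.hyps(1) \<phi> 2] by blast
  next
    case 3
    txt \<open>Eliminate \<open>v a\<close>: a separator \<open>\<psi>\<close> of the projected family \<open>w\<close> gives a separator \<open>\<phi>'\<close>
      of \<open>I\<close> orthogonal to \<open>v a\<close>, which is then tilted towards \<open>-\<phi>\<close>.\<close>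
    define w where "w = (\<lambda>i \<sigma>. dot (v i) \<phi> * v a \<sigma> + (- dot (v a) \<phi>) * v i \<sigma>)"
    have "positively_independent I w"
      unfolding w_def using insert.prems insert.hyps 3 \<phi>
      by (intro positively_independent_project) (auto intro: less_imp_le)
    then obtain \<psi> where \<psi>: "\<forall>i\<in>I. dot (w i) \<psi> > 0"
      using insert.IH by blast
    define \<phi>' where "\<phi>' = (\<lambda>\<sigma>. (- dot (v a) \<phi>) * \<psi> \<sigma> + dot (v a) \<psi> * \<phi> \<sigma>)"
    have "dot (v i) \<phi>' = dot (w i) \<psi>" for i
      unfolding \<phi>'_def w_def dot_lincomb_left dot_lincomb_right by (simp add: dot_def)
    then have "\<forall>i\<in>I. dot (v i) \<phi>' > 0" using \<psi> by simp
    moreover have "dot (v a) \<phi>' = 0"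
      unfolding \<phi>'_def dot_lincomb_right by simp
    moreover have "dot (v a) (\<lambda>\<sigma>. - \<phi> \<sigma>) > 0"
      using 3 by (simp add: dot_def sum_negf)
    ultimately show ?thesis using dot_pos_insert[OF insert.hyps(1)] by blast
  qed
qed

section \<open>Integral vertices of separator polyhedra\<close>

lemma exists_first_zero_of_decreasing_affine:
  fixes K :: "('f::linordered_field \<times> 'f) set"
  assumes "finite K" "K \<noteq> {}" "\<forall>(a, b)\<in>K. a > 0 \<and> b < 0"
  shows "\<exists>t>0. (\<forall>(a, b)\<in>K. a + t * b \<ge> 0) \<and> (\<exists>(a, b)\<in>K. a + t * b = 0)"
proof -
  define t where "t = Min ((\<lambda>(a, b). a / - b) ` K)"
  have "t \<in> (\<lambda>(a, b). a / - b) ` K"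
    unfolding t_def using assms(1,2) by (intro Min_in) auto
  then obtain a0 b0 where ab0: "(a0, b0) \<in> K" "t = a0 / - b0" by auto
  then have "t > 0" "a0 + t * b0 = 0"
    using assms(3) by (auto simp: divide_pos_neg field_simps)
  moreover have "a + t * b \<ge> 0" if "(a, b) \<in> K" for a b
  proof -
    have "t \<le> a / - b"
      unfolding t_def using assms(1) that by (intro Min_le) force+
    then show ?thesis using assms(3) that by (auto simp: field_simps)
  qed
  ultimately show ?thesis using ab0(1) by blast
qed

lemma det_in_Ints:
  fixes A :: "'a::comm_ring_1^'n^'n"
  assumes "\<And>i j. A$i$j \<in> \<int>"
  shows "det A \<in> \<int>"
  unfolding det_def by (intro Ints_sum Ints_mult Ints_prod) (auto simp: assms)

lemma abs_det_le:
  fixes A :: "'a::linordered_idom^'n^'n"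
  assumes "\<And>i j. \<bar>A$i$j\<bar> \<le> c"
  shows "\<bar>det A\<bar> \<le> fact CARD('n) * c ^ CARD('n)"
proof -
  have "\<bar>det A\<bar> \<le> (\<Sum>p\<in>{p. p permutes (UNIV::'n set)}. \<bar>of_int (sign p) * (\<Prod>i\<in>UNIV. A$i$p i)\<bar>)"
    unfolding det_def by (rule sum_abs)
  also have "\<dots> \<le> (\<Sum>p\<in>{p. p permutes (UNIV::'n set)}. c ^ CARD('n))"
  proof (rule sum_mono)
    fix p :: "'n \<Rightarrow> 'n"
    have "\<bar>of_int (sign p) * (\<Prod>i\<in>UNIV. A$i$p i)\<bar> = (\<Prod>i\<in>UNIV. \<bar>A$i$p i\<bar>)"
      by (simp add: abs_mult abs_prod sign_def)
    also have "\<dots> \<le> (\<Prod>i\<in>(UNIV::'n set). c)"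
      by (rule prod_mono) (auto simp: assms)
    finally show "\<bar>of_int (sign p) * (\<Prod>i\<in>UNIV. A$i$p i)\<bar> \<le> c ^ CARD('n)" by simp
  qed
  also have "\<dots> = fact CARD('n) * c ^ CARD('n)"
    by (simp add: card_permutations)
  finally show ?thesis .
qed

text \<open>By Cramer's rule the coordinates of \<open>\<bar>det M\<bar> *\<^sub>R x\<close> are, up to sign, determinants of
  matrices with entries from \<open>M\<close> and \<open>M *v x\<close>.\<close>
lemma Cramer_integral_multiple:
  fixes M :: "real^'n^'n"
  assumes "\<And>i j. M$i$j \<in> \<int> \<and> \<bar>M$i$j\<bar> \<le> c" "\<And>i. (M *v x)$i \<in> \<int> \<and> \<bar>(M *v x)$i\<bar> \<le> c"
  shows "(\<bar>det M\<bar> *\<^sub>R x)$k \<in> \<int> \<and> \<bar>(\<bar>det M\<bar> *\<^sub>R x)$k\<bar> \<le> fact CARD('n) * c ^ CARD('n)"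
proof -
  define Mk :: "real^'n^'n" where "Mk = (\<chi> i j. if j = k then (M *v x)$i else M$i$j)"
  have "det Mk = x$k * det M"
    unfolding Mk_def by (rule cramer_lemma)
  then have "(\<bar>det M\<bar> *\<^sub>R x)$k = sgn (det M) * det Mk"
    by (simp add: abs_sgn algebra_simps)
  moreover have "det Mk \<in> \<int>" "\<bar>det Mk\<bar> \<le> fact CARD('n) * c ^ CARD('n)"
    unfolding Mk_def using assms by (auto intro!: det_in_Ints abs_det_le)
  ultimately show ?thesis
    by (auto simp: abs_mult sgn_real_def)
qed

lemma exists_invertible_with_rows_in:
  fixes S :: "(real^'n) set"
  assumes "span S = UNIV"
  shows "\<exists>M :: real^'n^'n. invertible M \<and> (\<forall>i. M$i \<in> S)"
proof -
  obtain B where B: "B \<subseteq> S" "independent B" "S \<subseteq> span B"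
    by (rule maximal_independent_subset)
  have spanB: "span B = UNIV"
    using assms B(3) by (metis span_minimal subspace_span top.extremum_uniqueI)
  have "finite B" "card B = CARD('n)"
    using B(2) spanB basis_card_eq_dim[of B UNIV] dim_UNIV independent_bound by auto
  then obtain h where h: "bij_betw h (UNIV::'n set) B"
    using finite_same_card_bij[of "UNIV::'n set" B] by auto
  define M :: "real^'n^'n" where "M = (\<chi> i. h i)"
  have "rows M = B"
    using h unfolding rows_def row_def M_def bij_betw_def by auto
  then have "\<exists>M'. M' ** M = mat 1"
    using matrix_left_invertible_span_rows[of M] spanB by simp
  then have "invertible M"
    unfolding invertible_def using matrix_left_right_inverse by blast
  moreover have "M$i \<in> S" for i
    using h B(1) bij_betwE unfolding M_def by fastforce
  ultimately show ?thesis by blast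
qed

text \<open>Coordinate hyperplanes through \<open>\<phi>\<close> are counted as active although they are not constraints:
  this makes every feasible region pointed, so that a vertex exists even if it contains lines.\<close>
definition active_constraints :: "(real^'n) set \<Rightarrow> real^'n \<Rightarrow> (real^'n) set" where
  "active_constraints R \<phi> = {r \<in> R. inner r \<phi> = 1} \<union> {axis i 1 | i. \<phi>$i = 0}"

lemma active_constraints_translate:
  assumes "\<forall>x\<in>active_constraints R \<phi>. inner s x = 0"
  shows "active_constraints R \<phi> \<subseteq> active_constraints R (\<phi> + t *\<^sub>R s)"
proof
  fix x assume x: "x \<in> active_constraints R \<phi>"
  then have sx: "inner s x = 0" using assms by blast
  from x consider "x \<in> R" "inner x \<phi> = 1" | j where "x = axis j 1" "\<phi>$j = 0"
    unfolding active_constraints_def by auto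
  then show "x \<in> active_constraints R (\<phi> + t *\<^sub>R s)"
  proof cases
    case 1
    then show ?thesis using sx
      unfolding active_constraints_def by (auto simp: inner_add_right inner_commute)
  next
    case 2
    then have "s$j = 0" using sx by (simp add: inner_axis)
    then show ?thesis using 2 unfolding active_constraints_def by auto
  qed
qed

text \<open>Along \<open>\<phi> + t *\<^sub>R s\<close> the active constraints stay active, and coordinate \<open>i\<close> reaches \<open>0\<close>
  in finite time because \<open>s$i * \<phi>$i < 0\<close>; so there is a first time at which a row constraint
  becomes tight or a coordinate vanishes.\<close>
lemma exists_first_hitting_time:
  fixes R :: "(real^'n) set"
  assumes "finite R" "\<forall>r\<in>R. inner r \<phi> \<ge> 1" "\<forall>x\<in>active_constraints R \<phi>. inner s x = 0"
    and "s$i * \<phi>$i < 0"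
  shows "\<exists>t>0. (\<forall>r\<in>R. inner r s < 0 \<longrightarrow> inner r \<phi> - 1 + t * inner r s \<ge> 0) \<and>
           ((\<exists>r\<in>R. inner r s < 0 \<and> inner r \<phi> - 1 + t * inner r s = 0) \<or>
            (\<exists>j. s$j \<noteq> 0 \<and> \<phi>$j + t * s$j = 0))"
proof -
  define K where "K = (\<lambda>r. (inner r \<phi> - 1, inner r s)) ` {r \<in> R. inner r s < 0}
                    \<union> (\<lambda>j. (\<phi>$j * \<phi>$j, \<phi>$j * s$j)) ` {j. \<phi>$j * s$j < 0}"
  have "finite K" "K \<noteq> {}"
    unfolding K_def using assms(1,4) by (auto simp: mult.commute)
  moreover have "\<forall>(a, b)\<in>K. a > 0 \<and> b < 0"
  proof -
    have "inner r \<phi> - 1 > 0" if r: "r \<in> R" "inner r s < 0" for r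
    proof -
      have "r \<notin> active_constraints R \<phi>" using r(2) assms(3) by (auto simp: inner_commute)
      then have "inner r \<phi> \<noteq> 1" using r(1) by (simp add: active_constraints_def)
      then show ?thesis using assms(2) r(1) by force
    qed
    moreover have "\<phi>$j * \<phi>$j > 0" if "\<phi>$j * s$j < 0" for j
    proof -
      have "\<phi>$j \<noteq> 0" using that by auto
      then show ?thesis by (auto simp: zero_less_mult_iff linorder_neq_iff)
    qed
    ultimately show ?thesis unfolding K_def by auto
  qed
  ultimately obtain t where t: "t > 0" "\<forall>(a, b)\<in>K. a + t * b \<ge> 0" "\<exists>(a, b)\<in>K. a + t * b = 0"
    by (blast dest: exists_first_zero_of_decreasing_affine)
  have "\<phi>$j + t * s$j = 0" "s$j \<noteq> 0" if "\<phi>$j * s$j < 0" "\<phi>$j * \<phi>$j + t * (\<phi>$j * s$j) = 0" for j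
  proof -
    have "\<phi>$j * (\<phi>$j + t * s$j) = 0" using that(2) by (simp add: algebra_simps)
    then show "\<phi>$j + t * s$j = 0" "s$j \<noteq> 0" using that(1) by auto
  qed
  then show ?thesis
    using t unfolding K_def by blast
qed

lemma exists_new_active_constraint:
  fixes R :: "(real^'n) set"
  assumes "finite R" "\<forall>r\<in>R. inner r \<phi> \<ge> 1" "\<forall>x\<in>active_constraints R \<phi>. inner s x = 0"
    and "s$i * \<phi>$i < 0"
  shows "\<exists>t. (\<forall>r\<in>R. inner r (\<phi> + t *\<^sub>R s) \<ge> 1) \<and>
             (\<exists>x\<in>active_constraints R (\<phi> + t *\<^sub>R s). inner s x \<noteq> 0)"
proof -
  obtain t where t: "t > 0" "\<forall>r\<in>R. inner r s < 0 \<longrightarrow> inner r \<phi> - 1 + t * inner r s \<ge> 0"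
    "(\<exists>r\<in>R. inner r s < 0 \<and> inner r \<phi> - 1 + t * inner r s = 0) \<or> (\<exists>j. s$j \<noteq> 0 \<and> \<phi>$j + t * s$j = 0)"
    using exists_first_hitting_time[OF assms] by blast
  have "inner r (\<phi> + t *\<^sub>R s) \<ge> 1" if r: "r \<in> R" for r
  proof (cases "inner r s < 0")
    case True
    then have "inner r \<phi> - 1 + t * inner r s \<ge> 0" using t(2) r by blast
    then show ?thesis by (simp add: inner_add_right)
  next
    case False
    then have "t * inner r s \<ge> 0" using t(1) by simp
    moreover have "inner r \<phi> \<ge> 1" using assms(2) r by blast
    ultimately show ?thesis by (simp add: inner_add_right)
  qed
  moreover have "\<exists>x\<in>active_constraints R (\<phi> + t *\<^sub>R s). inner s x \<noteq> 0"
    using t(3)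
  proof (elim disjE bexE exE conjE)
    fix r assume "r \<in> R" "inner r s < 0" "inner r \<phi> - 1 + t * inner r s = 0"
    then show ?thesis
      unfolding active_constraints_def by (intro bexI[of _ r]) (auto simp: inner_add_right inner_commute)
  next
    fix j assume "s$j \<noteq> 0" "\<phi>$j + t * s$j = 0"
    then show ?thesis
      unfolding active_constraints_def by (intro bexI[of _ "axis j 1"]) (auto simp: inner_axis)
  qed
  ultimately show ?thesis by blast
qed

lemma active_constraints_dim_increase:
  fixes R :: "(real^'n) set"
  assumes "finite R" "\<forall>r\<in>R. inner r \<phi> \<ge> 1" "span (active_constraints R \<phi>) \<noteq> UNIV"
  shows "\<exists>\<phi>'. (\<forall>r\<in>R. inner r \<phi>' \<ge> 1) \<and>
              dim (active_constraints R \<phi>) < dim (active_constraints R \<phi>')"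
proof -
  let ?A = "active_constraints R \<phi>"
  obtain d where d: "d \<noteq> 0" "\<forall>x\<in>span ?A. inner d x = 0"
    using span_not_UNIV_orthogonal[OF assms(3)] by blast
  obtain i where di: "d$i \<noteq> 0"
    using d(1) by (metis vec_eq_iff zero_index)
  have "\<phi>$i \<noteq> 0"
  proof
    assume "\<phi>$i = 0"
    then have "axis i 1 \<in> span ?A"
      unfolding active_constraints_def by (intro span_base) auto
    then show False using d(2) di by (auto simp: inner_axis)
  qed
  define s where "s = (if d$i * \<phi>$i < 0 then d else - d)"
  have s_perp: "\<forall>x\<in>span ?A. inner s x = 0"
    using d(2) by (simp add: s_def)
  have "s$i * \<phi>$i < 0"
    using di \<open>\<phi>$i \<noteq> 0\<close> by (auto simp: s_def mult_less_0_iff linorder_neq_iff)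
  then obtain t where t: "\<forall>r\<in>R. inner r (\<phi> + t *\<^sub>R s) \<ge> 1"
      "\<exists>x\<in>active_constraints R (\<phi> + t *\<^sub>R s). inner s x \<noteq> 0"
    using exists_new_active_constraint[OF assms(1,2)] s_perp span_base by blast
  let ?A' = "active_constraints R (\<phi> + t *\<^sub>R s)"
  have "span ?A \<subseteq> span ?A'"
    using active_constraints_translate s_perp span_base span_mono by meson
  moreover have "\<not> span ?A' \<subseteq> span ?A"
    using t(2) s_perp span_base by blast
  ultimately have "dim ?A < dim ?A'"
    by (intro dim_psubset) blast
  then show ?thesis using t(1) by blast
qed

lemma exists_vertex:
  fixes R :: "(real^'n) set"
  assumes "finite R" "\<forall>r\<in>R. inner r \<phi> \<ge> 1"
  shows "\<exists>\<phi>. (\<forall>r\<in>R. inner r \<phi> \<ge> 1) \<and> span (active_constraints R \<phi>) = UNIV"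
proof -
  obtain \<phi>' where \<phi>': "\<forall>r\<in>R. inner r \<phi>' \<ge> 1"
    and max: "\<forall>\<psi>. (\<forall>r\<in>R. inner r \<psi> \<ge> 1) \<longrightarrow>
                   dim (active_constraints R \<psi>) \<le> dim (active_constraints R \<phi>')"
    using ex_has_greatest_nat[of "\<lambda>\<psi>. \<forall>r\<in>R. inner r \<psi> \<ge> 1" \<phi>
        "\<lambda>\<psi>. dim (active_constraints R \<psi>)" "CARD('n) + 1"] assms(2)
    by (metis dim_subset_UNIV_cart less_Suc_eq_le Suc_eq_plus1)
  then show ?thesis
    using active_constraints_dim_increase[OF assms(1) \<phi>'] by (meson leD)
qed

lemma active_constraint_bounds:
  assumes "x \<in> active_constraints R \<phi>" "\<forall>r\<in>R. \<forall>j. r$j \<in> \<int> \<and> \<bar>r$j\<bar> \<le> c" "c \<ge> 1"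
  shows "x$j \<in> \<int> \<and> \<bar>x$j\<bar> \<le> c" "inner x \<phi> \<in> \<int> \<and> \<bar>inner x \<phi>\<bar> \<le> c"
  using assms unfolding active_constraints_def
  by (auto simp: inner_axis') (auto simp: axis_def)

lemma exists_bounded_integer_separator:
  fixes R :: "(real^'n) set"
  assumes "finite R" "\<forall>r\<in>R. \<forall>j. r$j \<in> \<int> \<and> \<bar>r$j\<bar> \<le> c" "c \<ge> 1" "\<forall>r\<in>R. inner r \<phi> > 0"
  shows "\<exists>\<psi>. (\<forall>r\<in>R. inner r \<psi> > 0) \<and> (\<forall>k. \<psi>$k \<in> \<int> \<and> \<bar>\<psi>$k\<bar> \<le> fact CARD('n) * c ^ CARD('n))"
proof -
  define m where "m = (\<Sum>r\<in>R. 1 / inner r \<phi>)"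
  have "inner r (m *\<^sub>R \<phi>) \<ge> 1" if r: "r \<in> R" for r
  proof -
    have "1 / inner r \<phi> \<le> m"
      unfolding m_def by (rule member_le_sum[OF r]) (use assms(1,4) in auto)
    then show ?thesis using assms(4) r by (simp add: divide_le_eq)
  qed
  then obtain \<phi>' where \<phi>': "\<forall>r\<in>R. inner r \<phi>' \<ge> 1" "span (active_constraints R \<phi>') = UNIV"
    using exists_vertex[OF assms(1)] by blast
  then obtain M :: "real^'n^'n" where M: "invertible M" "\<forall>i. M$i \<in> active_constraints R \<phi>'"
    using exists_invertible_with_rows_in by blast
  have "(M *v \<phi>')$i = inner (M$i) \<phi>'" for i
    by (simp add: matrix_vector_mult_def inner_vec_def)
  then have "M$i$j \<in> \<int> \<and> \<bar>M$i$j\<bar> \<le> c" "(M *v \<phi>')$i \<in> \<int> \<and> \<bar>(M *v \<phi>')$i\<bar> \<le> c" for i j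
    using active_constraint_bounds[OF M(2)[rule_format] assms(2,3)] by simp_all
  then have "(\<bar>det M\<bar> *\<^sub>R \<phi>')$k \<in> \<int> \<and> \<bar>(\<bar>det M\<bar> *\<^sub>R \<phi>')$k\<bar> \<le> fact CARD('n) * c ^ CARD('n)" for k
    by (rule Cramer_integral_multiple)
  moreover have "inner r (\<bar>det M\<bar> *\<^sub>R \<phi>') > 0" if "r \<in> R" for r
  proof -
    have "\<bar>det M\<bar> > 0" using M(1) by (simp add: invertible_det_nz)
    moreover have "inner r \<phi>' \<ge> 1" using \<phi>'(1) that by blast
    ultimately show ?thesis by simp
  qed
  ultimately show ?thesis by blast
qed

section \<open>Separating the cones\<close>

definition real_vec :: "('a::finite \<Rightarrow> rat) \<Rightarrow> real^'a" where
  "real_vec x = (\<chi> \<sigma>. of_rat (x \<sigma>))"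

lemma real_vec_nth [simp]: "real_vec x $ \<sigma> = of_rat (x \<sigma>)"
  by (simp add: real_vec_def)

lemma inner_real_vec: "inner (real_vec x) y = (\<Sum>\<sigma>\<in>UNIV. of_rat (x \<sigma>) * y$\<sigma>)"
  by (simp add: inner_vec_def)

lemma inner_real_vec_real_vec: "inner (real_vec x) (real_vec y) = of_rat (dot x y)"
  by (simp add: inner_real_vec dot_def of_rat_sum of_rat_mult)

lemma exists_bounded_integer_dot_separator:
  fixes R :: "('a::finite \<Rightarrow> rat) set"
  assumes "finite R" "positively_independent R (\<lambda>x. x)"
    and "\<And>r \<sigma>. r \<in> R \<Longrightarrow> r \<sigma> \<in> \<int> \<and> \<bar>r \<sigma>\<bar> \<le> of_nat C" "C \<ge> 1"
  shows "\<exists>\<phi> :: 'a \<Rightarrow> int. (\<forall>r\<in>R. dot (\<lambda>\<sigma>. of_int (\<phi> \<sigma>)) r > 0) \<and>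
           (\<forall>\<sigma>. \<bar>\<phi> \<sigma>\<bar> \<le> fact CARD('a) * int C ^ CARD('a))"
proof -
  obtain \<phi>q where \<phi>q: "\<forall>r\<in>R. dot r \<phi>q > 0"
    using gordan[OF assms(1,2)] by blast
  have entries: "\<forall>r\<in>real_vec ` R. \<forall>j. r$j \<in> \<int> \<and> \<bar>r$j\<bar> \<le> real C"
  proof (intro ballI allI)
    fix r' j assume "r' \<in> real_vec ` R"
    then obtain r where r: "r \<in> R" "r' = real_vec r" by blast
    obtain k where k: "r j = of_int k" using assms(3)[OF r(1)] Ints_cases by metis
    moreover have "\<bar>r j\<bar> \<le> of_nat C" using assms(3)[OF r(1)] by blast
    ultimately have "\<bar>k\<bar> \<le> int C"
      by (metis of_int_abs of_int_le_iff of_int_of_nat_eq)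
    moreover have "r'$j = of_int k" using r(2) k by simp
    ultimately show "r'$j \<in> \<int> \<and> \<bar>r'$j\<bar> \<le> real C"
      by (metis Ints_of_int of_int_abs of_int_le_iff of_int_of_nat_eq)
  qed
  have pos: "\<forall>r\<in>real_vec ` R. inner r (real_vec \<phi>q) > 0"
    using \<phi>q by (simp add: inner_real_vec_real_vec)
  have "finite (real_vec ` R)" "real C \<ge> 1" using assms(1,4) by simp_all
  then obtain \<psi> :: "real^'a" where \<psi>: "\<forall>r\<in>real_vec ` R. inner r \<psi> > 0"
      "\<forall>k. \<psi>$k \<in> \<int> \<and> \<bar>\<psi>$k\<bar> \<le> fact CARD('a) * real C ^ CARD('a)"
    using exists_bounded_integer_separator[OF _ entries _ pos] by blast
  define \<phi> where "\<phi> \<sigma> = \<lfloor>\<psi>$\<sigma>\<rfloor>" for \<sigma>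
  have \<phi>_eq: "of_int (\<phi> \<sigma>) = \<psi>$\<sigma>" for \<sigma>
  proof -
    have "\<psi>$\<sigma> \<in> \<int>" using \<psi>(2) by blast
    then show ?thesis unfolding \<phi>_def by (elim Ints_cases) simp
  qed
  have "of_rat (dot (\<lambda>\<sigma>. of_int (\<phi> \<sigma>)) r) = inner (real_vec r) \<psi>" for r
    by (simp add: inner_real_vec dot_def of_rat_sum of_rat_mult \<phi>_eq mult.commute)
  then have "\<forall>r\<in>R. dot (\<lambda>\<sigma>. of_int (\<phi> \<sigma>)) r > 0"
    using \<psi>(1) by (simp flip: zero_less_of_rat_iff[where 'a=real])
  moreover have "\<bar>\<phi> \<sigma>\<bar> \<le> fact CARD('a) * int C ^ CARD('a)" for \<sigma>
  proof -
    have "real_of_int \<bar>\<phi> \<sigma>\<bar> \<le> real_of_int (fact CARD('a) * int C ^ CARD('a))"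
      using \<psi>(2) \<phi>_eq by simp
    then show ?thesis by (simp only: of_int_le_iff)
  qed
  ultimately show ?thesis by blast
qed

hide_const (open) Topology_Euclidean_Space.box

lemma finite_box: "finite (box C :: ('a::finite \<Rightarrow> rat) set)"
proof -
  have "box C \<subseteq> {f. \<forall>\<sigma>. (\<sigma> \<in> UNIV \<longrightarrow> f \<sigma> \<in> of_nat ` {..C}) \<and> (\<sigma> \<notin> UNIV \<longrightarrow> f \<sigma> = 0)}"
    unfolding Defs.box_def by auto
  moreover have "finite {f :: 'a \<Rightarrow> rat. \<forall>\<sigma>. (\<sigma> \<in> UNIV \<longrightarrow> f \<sigma> \<in> of_nat ` {..C}) \<and> (\<sigma> \<notin> UNIV \<longrightarrow> f \<sigma> = 0)}"
    by (rule finite_set_of_finite_funs) auto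
  ultimately show ?thesis by (rule finite_subset)
qed

lemma box_nonneg:
  assumes "x \<in> box C"
  shows "x \<sigma> \<ge> 0"
proof -
  obtain k :: nat where "x \<sigma> = of_nat k" using assms unfolding Defs.box_def by blast
  then show ?thesis by simp
qed

lemma box_entry_bounds:
  assumes "x \<in> box C"
  shows "x \<sigma> \<in> \<int> \<and> \<bar>x \<sigma>\<bar> \<le> of_nat C"
proof -
  obtain k :: nat where "k \<le> C" "x \<sigma> = of_nat k" using assms unfolding Defs.box_def by blast
  then show ?thesis by simp
qed

lemma box_Int_uminus_box: "box C \<inter> uminus ` box C \<subseteq> {\<lambda>_. 0}"
proof
  fix x assume "x \<in> box C \<inter> uminus ` box C"
  then obtain y where "x \<in> box C" "y \<in> box C" "x = - y" by blast
  then have "x \<sigma> = 0" for \<sigma>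
    using box_nonneg[of x C \<sigma>] box_nonneg[of y C \<sigma>] by simp
  then show "x \<in> {\<lambda>_. 0}" by auto
qed

lemma positively_independent_nonneg:
  fixes S :: "('a \<Rightarrow> 'f::linordered_field) set"
  assumes "finite S" "\<forall>x\<in>S. \<forall>\<sigma>. x \<sigma> \<ge> 0" "(\<lambda>_. 0) \<notin> S"
  shows "positively_independent S (\<lambda>x. x)"
  unfolding positively_independent_def
proof (intro allI impI ballI)
  fix c y assume c: "\<forall>x\<in>S. c x \<ge> 0" "\<forall>\<sigma>. (\<Sum>x\<in>S. c x * x \<sigma>) = 0" and y: "y \<in> S"
  have "y \<noteq> (\<lambda>_. 0)" using y assms(3) by blast
  then obtain \<sigma> where y\<sigma>: "y \<sigma> \<noteq> 0" by auto
  have "\<forall>x\<in>S. c x * x \<sigma> = 0"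
    using c assms(1,2) by (subst sum_nonneg_eq_0_iff[symmetric]) auto
  then have "c y * y \<sigma> = 0" using y by blast
  then show "c y = 0" using y\<sigma> by simp
qed

lemma positively_independent_of_cones_meeting_trivially:
  fixes P Q :: "('a::finite \<Rightarrow> rat) set"
  assumes "P \<subseteq> box C" "Q \<subseteq> box C" "(\<lambda>_. 0) \<notin> P" "(\<lambda>_. 0) \<notin> Q"
    and "pcone P \<inter> pcone Q = {\<lambda>_. 0}"
  shows "positively_independent (P \<union> uminus ` Q) (\<lambda>x. x)"
  unfolding positively_independent_def
proof (intro allI impI ballI)
  fix c r assume c: "\<forall>x\<in>P \<union> uminus ` Q. c x \<ge> 0" "\<forall>\<sigma>. (\<Sum>x\<in>P \<union> uminus ` Q. c x * x \<sigma>) = 0"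
    and r: "r \<in> P \<union> uminus ` Q"
  have fin: "finite P" "finite Q"
    using assms(1,2) finite_box finite_subset by blast+
  have "P \<inter> uminus ` Q \<subseteq> box C \<inter> uminus ` box C"
    using assms(1,2) by (intro Int_mono image_mono)
  then have zero: "P \<inter> uminus ` Q \<subseteq> {\<lambda>_. 0}"
    using box_Int_uminus_box by (rule order_trans)
  have "P \<inter> uminus ` Q = {}"
  proof (rule ccontr)
    assume "P \<inter> uminus ` Q \<noteq> {}"
    then obtain x where x: "x \<in> P \<inter> uminus ` Q" by auto
    then have "x = (\<lambda>_. 0)" using subsetD[OF zero x] by simp
    then show False using x assms(3) by simp
  qed
  have split: "(\<Sum>p\<in>P. c p * p \<sigma>) = (\<Sum>q\<in>Q. c (- q) * q \<sigma>)" for \<sigma>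
  proof -
    have "inj_on uminus Q" by (auto simp: inj_on_def fun_eq_iff)
    then have "(\<Sum>x\<in>uminus ` Q. c x * x \<sigma>) = - (\<Sum>q\<in>Q. c (- q) * q \<sigma>)"
      by (simp add: sum.reindex sum_negf)
    moreover have "(\<Sum>x\<in>P \<union> uminus ` Q. c x * x \<sigma>) = (\<Sum>p\<in>P. c p * p \<sigma>) + (\<Sum>x\<in>uminus ` Q. c x * x \<sigma>)"
      using fin \<open>P \<inter> uminus ` Q = {}\<close> by (simp add: sum.union_disjoint)
    ultimately show ?thesis using c(2) by simp
  qed
  define x where "x = (\<lambda>\<sigma>. \<Sum>p\<in>P. c p * p \<sigma>)"
  have "x \<in> pcone P"
    unfolding pcone_def x_def using c(1) by (intro CollectI exI[of _ c]) auto
  moreover have "x \<in> pcone Q"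
    unfolding pcone_def x_def split using c(1) by (intro CollectI exI[of _ "\<lambda>q. c (- q)"]) auto
  ultimately have "x = (\<lambda>_. 0)" using assms(5) by blast
  then have x0: "(\<Sum>p\<in>P. c p * p \<sigma>) = 0" "(\<Sum>q\<in>Q. c (- q) * q \<sigma>) = 0" for \<sigma>
    using split[of \<sigma>] unfolding x_def by (simp_all add: fun_eq_iff)
  have "x \<sigma> \<ge> 0" if "x \<in> P \<union> Q" for x \<sigma>
    using that assms(1,2) by (intro box_nonneg[of x C]) auto
  then have indep: "positively_independent P (\<lambda>x. x)" "positively_independent Q (\<lambda>x. x)"
    using positively_independent_nonneg fin assms(3,4) by blast+
  have "c p = 0" if "p \<in> P" for p
    by (rule positively_independentD[OF indep(1) _ x0(1) that]) (use c(1) in auto)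
  moreover have "c (- q) = 0" if "q \<in> Q" for q
    by (rule positively_independentD[OF indep(2) _ x0(2) that]) (use c(1) in auto)
  ultimately have "\<forall>p\<in>P. c p = 0" "\<forall>q\<in>Q. c (- q) = 0" by blast+
  then show "c r = 0" using r by blast
qed

lemma exists_integer_separator_of_box_cones:
  fixes P Q :: "('a::finite \<Rightarrow> rat) set"
  assumes "P \<subseteq> box C" "Q \<subseteq> box C" "(\<lambda>_. 0) \<notin> P" "(\<lambda>_. 0) \<notin> Q"
    and "pcone P \<inter> pcone Q = {\<lambda>_. 0}"
  shows "\<exists>\<phi> :: 'a \<Rightarrow> int. (\<forall>x\<in>P. dot (\<lambda>\<sigma>. of_int (\<phi> \<sigma>)) x > 0) \<and>
           (\<forall>x\<in>Q. dot (\<lambda>\<sigma>. of_int (\<phi> \<sigma>)) x < 0) \<and>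
           (\<Sum>\<sigma>\<in>UNIV. \<bar>\<phi> \<sigma>\<bar>) \<le> int CARD('a) * (fact CARD('a) * int (C + 1) ^ CARD('a))"
proof -
  let ?R = "P \<union> uminus ` Q"
  have "finite ?R"
    using assms(1,2) finite_box finite_subset by blast
  moreover have "r \<sigma> \<in> \<int> \<and> \<bar>r \<sigma>\<bar> \<le> of_nat (C + 1)" if "r \<in> ?R" for r \<sigma>
    using that assms(1,2) box_entry_bounds[of _ C \<sigma>] by fastforce
  ultimately obtain \<phi> :: "'a \<Rightarrow> int" where \<phi>: "\<forall>r\<in>?R. dot (\<lambda>\<sigma>. of_int (\<phi> \<sigma>)) r > 0"
      "\<forall>\<sigma>. \<bar>\<phi> \<sigma>\<bar> \<le> fact CARD('a) * int (C + 1) ^ CARD('a)"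
    using exists_bounded_integer_dot_separator[of ?R "C + 1"]
      positively_independent_of_cones_meeting_trivially[OF assms] by auto
  have "dot (\<lambda>\<sigma>. of_int (\<phi> \<sigma>)) x < 0" if "x \<in> Q" for x
    using \<phi>(1) that by (force simp: dot_def sum_negf)
  moreover have "(\<Sum>\<sigma>\<in>UNIV. \<bar>\<phi> \<sigma>\<bar>) \<le> int CARD('a) * (fact CARD('a) * int (C + 1) ^ CARD('a))"
    using \<phi>(2) by (intro sum_bounded_above) blast
  ultimately show ?thesis using \<phi>(1) by blast
qed

theorem lemma8:
  "\<exists>p :: real poly. \<forall>C7::nat. \<forall>P Q :: ('a::finite \<Rightarrow> rat) set.
     P \<subseteq> box C7 \<longrightarrow> Q \<subseteq> box C7 \<longrightarrow> (\<lambda>_. 0) \<notin> P \<longrightarrow> (\<lambda>_. 0) \<notin> Q \<longrightarrow>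
     pcone P \<inter> pcone Q = {\<lambda>_. 0} \<longrightarrow>
     (\<exists>\<phi> :: 'a \<Rightarrow> int.
        (\<forall>x\<in>P. (\<Sum>\<sigma>\<in>UNIV. of_int (\<phi> \<sigma>) * x \<sigma>) > 0) \<and>
        (\<forall>x\<in>Q. (\<Sum>\<sigma>\<in>UNIV. of_int (\<phi> \<sigma>) * x \<sigma>) < 0) \<and>
        real_of_int (\<Sum>\<sigma>\<in>UNIV. \<bar>\<phi> \<sigma>\<bar>) \<le> poly p (real C7))"
proof -
  define n where "n = CARD('a)"
  define p :: "real poly" where "p = [: real n * fact n :] * [:1, 1:] ^ n"
  show ?thesis
  proof (rule exI[of _ p], intro allI impI)
    fix C7 :: nat and P Q :: "('a \<Rightarrow> rat) set"
    assume "P \<subseteq> box C7" "Q \<subseteq> box C7" "(\<lambda>_. 0) \<notin> P" "(\<lambda>_. 0) \<notin> Q" "pcone P \<inter> pcone Q = {\<lambda>_. 0}"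
    from exists_integer_separator_of_box_cones[OF this] obtain \<phi> :: "'a \<Rightarrow> int" where \<phi>: "\<forall>x\<in>P. dot (\<lambda>\<sigma>. of_int (\<phi> \<sigma>)) x > 0"
        "\<forall>x\<in>Q. dot (\<lambda>\<sigma>. of_int (\<phi> \<sigma>)) x < 0"
        "(\<Sum>\<sigma>\<in>UNIV. \<bar>\<phi> \<sigma>\<bar>) \<le> int n * (fact n * int (C7 + 1) ^ n)"
      unfolding n_def by blast
    have "real_of_int (\<Sum>\<sigma>\<in>UNIV. \<bar>\<phi> \<sigma>\<bar>) \<le> of_int (int n * (fact n * int (C7 + 1) ^ n))"
      using \<phi>(3) by (simp only: of_int_le_iff)
    also have "\<dots> = poly p (real C7)"
      unfolding p_def by (simp add: poly_power algebra_simps)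
    finally have "real_of_int (\<Sum>\<sigma>\<in>UNIV. \<bar>\<phi> \<sigma>\<bar>) \<le> poly p (real C7)" .
    then show "\<exists>\<phi> :: 'a \<Rightarrow> int.
        (\<forall>x\<in>P. (\<Sum>\<sigma>\<in>UNIV. of_int (\<phi> \<sigma>) * x \<sigma>) > 0) \<and>
        (\<forall>x\<in>Q. (\<Sum>\<sigma>\<in>UNIV. of_int (\<phi> \<sigma>) * x \<sigma>) < 0) \<and>
        real_of_int (\<Sum>\<sigma>\<in>UNIV. \<bar>\<phi> \<sigma>\<bar>) \<le> poly p (real C7)"
      using \<phi>(1,2) unfolding dot_def by blast
  qed
qed

end
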